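(* Let $\Lambda$ and $\Lambda'$ be two transversal Lagrangian linear subspaces of $\mathbb{C}^n$ and let $f:[a,b]\times[0,1]\to\mathbb{C}^n$ be a holomorphic strip (in the variable $s+it$) such that $f([a,b]\times\{0\})\subset\Lambda$, $f([a,b]\times\{1\})\subset\Lambda'$, with $b-a>2$. Then there are constants $C$ and $\delta>0$, depending only on the relative position of $\Lambda$ and $\Lambda'$, such that for all $(s,t)\in[a,b]\times[0,1]$, $$\|f(s+it)\|\leq C\,\|f\|_{\infty,\,([a,a+2]\times[0,1])\cup([b-2,b]\times[0,1])}\;e^{-\delta\min(s-a,\,b-s)}.$$
   Context: $\|f\|_{\infty,A}$ denotes the supremum of $\|f\|$ over the set $A$; $\mathbb{C}^n$ carries its standard symplectic and complex structure. *)

theory Defs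
  imports "HOL-Complex_Analysis.Complex_Analysis"
begin

text \<open>Standard symplectic form on C^n: omega(u,v) = Im (sum_i conj(u_i) v_i),
  i.e. the form sum_i dx_i /\ dy_i.\<close>
definition std_omega :: "complex ^ 'n \<Rightarrow> complex ^ 'n \<Rightarrow> real" where
  "std_omega u v = (\<Sum>i\<in>UNIV. Im (cnj (u $ i) * v $ i))"

definition lagrangian_subspace :: "(complex ^ 'n) set \<Rightarrow> bool" where
  "lagrangian_subspace L \<longleftrightarrow> subspace L \<and> dim L = CARD('n) \<and>
     (\<forall>u\<in>L. \<forall>v\<in>L. std_omega u v = 0)"

definition transversal :: "(complex ^ 'n) set \<Rightarrow> (complex ^ 'n) set \<Rightarrow> bool" where
  "transversal L L' \<longleftrightarrow> L \<inter> L' = {0}"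

definition rect :: "real \<Rightarrow> real \<Rightarrow> real \<Rightarrow> real \<Rightarrow> complex set" where
  "rect a b c d = {z. a \<le> Re z \<and> Re z \<le> b \<and> c \<le> Im z \<and> Im z \<le> d}"

definition open_rect :: "real \<Rightarrow> real \<Rightarrow> real \<Rightarrow> real \<Rightarrow> complex set" where
  "open_rect a b c d = {z. a < Re z \<and> Re z < b \<and> c < Im z \<and> Im z < d}"

definition holomorphic_strip :: "real \<Rightarrow> real \<Rightarrow> (complex \<Rightarrow> complex ^ 'n) \<Rightarrow> bool" where
  "holomorphic_strip a b f \<longleftrightarrow> continuous_on (rect a b 0 1) f \<and>
     (\<forall>i. (\<lambda>z. f z $ i) holomorphic_on open_rect a b 0 1)"

definition sup_norm_on :: "(complex \<Rightarrow> 'a::real_normed_vector) \<Rightarrow> complex set \<Rightarrow> real" where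
  "sup_norm_on f A = (SUP z\<in>A. norm (f z))"

end

theory Submission
  imports Defs
begin

text \<open>
  Since \<Lambda> is Lagrangian, C^n is the direct sum of \<Lambda> and i\<Lambda>; since \<Lambda>' is transversal
  to \<Lambda>, it is the graph {S y + i y | y \<in> \<Lambda>} of a linear map S of \<Lambda>, and the Lagrangian
  condition on \<Lambda>' makes S self-adjoint. An eigenbasis \<phi>_k of S with eigenvalues \<mu>_k
  therefore satisfies \<mu>_k \<phi>_k + i \<phi>_k \<in> \<Lambda>', so the Hermitian products g_k = (\<phi>_k, f) are
  real on the lower edge of the strip and lie in cis \<theta>_k \<real> on the upper edge, where
  \<theta>_k = Arg (\<mu>_k + i) \<in> (0, \<pi>). Together they control the norm of f.

  For such a scalar g, Cauchy's formula for the kernel \<pi> exp (-\<theta> w) / (1 - exp (-\<pi> w))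
  centred at z, minus the conjugate of Cauchy's theorem for the same kernel centred at the
  reflected point cnj z, expresses g z through the two vertical sides alone: the boundary
  conditions make the contributions of the horizontal sides cancel. On the vertical sides the
  kernel is O(exp (-\<theta> d)) to the right and O(exp (-(\<pi> - \<theta>) d)) to the left of z, d being
  the horizontal distance, which yields decay at the rate min \<theta>_k (\<pi> - \<theta>_k).
\<close>

section \<open>A kernel for the strip\<close>

text \<open>
  \<pi> / (1 - exp (-\<pi> w)) has simple poles of residue 1 at the points 2ki; the factor
  exp (-\<theta> w) multiplies its 2i-periodicity by cis (2\<theta>), which matches the rotated
  boundary condition on the upper edge.
\<close>
definition strip_kernel :: "real \<Rightarrow> complex \<Rightarrow> complex" where
  "strip_kernel \<theta> w = of_real pi * exp (- of_real \<theta> * w) / (1 - exp (- of_real pi * w))"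

lemma strip_kernel_cnj: "cnj (strip_kernel \<theta> w) = strip_kernel \<theta> (cnj w)"
  by (simp add: strip_kernel_def exp_cnj)

lemma strip_kernel_shift: "strip_kernel \<theta> (w - 2 * \<i>) = cis (2 * \<theta>) * strip_kernel \<theta> w"
proof -
  have "exp (- of_real \<theta> * (w - 2 * \<i>)) = exp (- of_real \<theta> * w) * cis (2 * \<theta>)"
    by (simp add: cis_conv_exp algebra_simps flip: exp_add)
  moreover have "- of_real pi * (w - 2 * \<i>) = - of_real pi * w + 2 * of_real pi * \<i>"
    by (simp add: algebra_simps)
  then have "exp (- of_real pi * (w - 2 * \<i>)) = exp (- of_real pi * w)"
    by (simp only: exp_add exp_two_pi_i mult_1_right)
  ultimately show ?thesis
    by (simp add: strip_kernel_def)
qed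

lemma exp_minus_pi_mult_eq_1_imp_zero:
  assumes "exp (- of_real pi * w) = 1" and "\<bar>Im w\<bar> < 2"
  shows "w = 0"
proof -
  obtain n :: int where "Re w = 0" and "- Im w * pi = of_int (2 * n) * pi"
    using assms(1) by (auto simp: exp_eq_1 mult.commute)
  then have "- Im w = of_int (2 * n)"
    by (metis mult_cancel_right pi_neq_zero)
  with assms(2) have "n = 0"
    by linarith
  with \<open>Re w = 0\<close> \<open>- Im w = of_int (2 * n)\<close> show "w = 0"
    by (simp add: complex_eq_iff)
qed

lemma holomorphic_on_strip_kernel:
  assumes "\<And>w. w \<in> T \<Longrightarrow> \<bar>Im (w - c)\<bar> < 2 \<and> w \<noteq> c"
  shows "(\<lambda>w. strip_kernel \<theta> (w - c)) holomorphic_on T"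
  unfolding strip_kernel_def
  using assms exp_minus_pi_mult_eq_1_imp_zero by (intro holomorphic_intros) force

lemma norm_strip_kernel_le_right:
  assumes "1 \<le> Re w"
  shows "norm (strip_kernel \<theta> w) \<le> pi * exp (- \<theta> * Re w) / (1 - exp (- pi))"
proof -
  have "1 - exp (- pi) \<le> 1 - norm (exp (- of_real pi * w))"
    using assms by simp
  also have "\<dots> \<le> norm (1 - exp (- of_real pi * w))"
    by (metis norm_one norm_triangle_ineq2)
  finally have "1 - exp (- pi) \<le> norm (1 - exp (- of_real pi * w))" .
  moreover have "0 < 1 - exp (- pi)"
    by simp
  ultimately show ?thesis
    by (auto simp: strip_kernel_def norm_divide norm_mult intro!: frac_le)
qed

lemma norm_strip_kernel_le_left:
  assumes "Re w \<le> -1"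
  shows "norm (strip_kernel \<theta> w) \<le> pi * exp ((pi - \<theta>) * Re w) / (1 - exp (- pi))"
proof -
  have "exp (- pi * Re w) * (1 - exp (- pi)) \<le> exp (- pi * Re w) * (1 - exp (pi * Re w))"
    using mult_left_mono[OF assms, of pi] by (intro mult_left_mono) auto
  also have "\<dots> = norm (exp (- of_real pi * w)) - 1"
    by (simp add: algebra_simps flip: exp_add)
  also have "\<dots> \<le> norm (1 - exp (- of_real pi * w))"
    by (metis norm_minus_commute norm_one norm_triangle_ineq2)
  finally have "exp (- pi * Re w) * (1 - exp (- pi)) \<le> norm (1 - exp (- of_real pi * w))" .
  moreover have "0 < exp (- pi * Re w) * (1 - exp (- pi))"
    by simp
  ultimately have "norm (strip_kernel \<theta> w) \<le> pi * exp (- \<theta> * Re w) / (exp (- pi * Re w) * (1 - exp (- pi)))"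
    by (auto simp: strip_kernel_def norm_divide norm_mult intro!: frac_le)
  also have "\<dots> = pi * exp ((pi - \<theta>) * Re w) / (1 - exp (- pi))"
  proof -
    have "(pi - \<theta>) * Re w = - \<theta> * Re w - (- pi * Re w)"
      by algebra
    then have "exp ((pi - \<theta>) * Re w) = exp (- \<theta> * Re w) / exp (- pi * Re w)"
      by (simp only: exp_diff)
    then show ?thesis
      by simp
  qed
  finally show ?thesis .
qed

lemma strip_kernel_residue: "((\<lambda>w. w * strip_kernel \<theta> w) \<longlongrightarrow> 1) (at 0)"
proof -
  have "((\<lambda>w::complex. 1 - exp (- of_real pi * w)) has_field_derivative of_real pi) (at 0)"
    by (auto intro!: derivative_eq_intros)
  then have "((\<lambda>w::complex. (1 - exp (- of_real pi * w)) / w) \<longlongrightarrow> of_real pi) (at 0)"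
    unfolding has_field_derivative_iff by simp
  then have "((\<lambda>w::complex. of_real pi * exp (- of_real \<theta> * w) / ((1 - exp (- of_real pi * w)) / w))
      \<longlongrightarrow> of_real pi * exp (- of_real \<theta> * 0) / of_real pi) (at 0)"
    by (intro tendsto_intros) auto
  then have "((\<lambda>w::complex. of_real pi * exp (- of_real \<theta> * w) / ((1 - exp (- of_real pi * w)) / w))
      \<longlongrightarrow> 1) (at 0)"
    by simp
  then show ?thesis
    by (rule Lim_transform_within[OF _ zero_less_one]) (simp add: strip_kernel_def field_simps)
qed

lemma strip_kernel_removable:
  obtains h where "h holomorphic_on {w. \<bar>Im (w - z)\<bar> < 2}" and "h z = 1"
    and "\<And>w. \<bar>Im (w - z)\<bar> < 2 \<Longrightarrow> w \<noteq> z \<Longrightarrow> h w = (w - z) * strip_kernel \<theta> (w - z)"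
proof -
  define U where "U = {w. \<bar>Im (w - z)\<bar> < 2}"
  have "open U"
    unfolding U_def by (intro open_Collect_less continuous_intros)
  have "(\<lambda>w. (w - z) * strip_kernel \<theta> (w - z)) holomorphic_on U - {z}"
    by (intro holomorphic_intros holomorphic_on_strip_kernel) (auto simp: U_def)
  moreover have "((\<lambda>w. (w - z) * strip_kernel \<theta> (w - z)) \<longlongrightarrow> 1) (at z)"
    using strip_kernel_residue[of \<theta>] by (simp add: LIM_offset_zero_iff)
  ultimately have "(\<lambda>w. if w = z then 1 else (w - z) * strip_kernel \<theta> (w - z)) holomorphic_on U"
    using \<open>open U\<close> by (intro removable_singularity)
  then show ?thesis
    unfolding U_def by (rule that) auto
qed

lemma cis_double_mult_cnj:
  assumes "Im (cnj (cis \<theta>) * u) = 0"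
  shows "cis (2 * \<theta>) * cnj u = u"
proof -
  define r where "r = cnj (cis \<theta>) * u"
  have "cnj r = r"
    using assms by (simp add: r_def complex_eq_iff)
  have "cis \<theta> * cnj (cis \<theta>) = 1"
    by (simp add: cis_cnj cis_mult)
  then have u: "u = cis \<theta> * r"
    by (simp add: r_def mult.assoc[symmetric])
  have "cis (2 * \<theta>) * cnj u = (cis (2 * \<theta>) * cis (- \<theta>)) * r"
    using \<open>cnj r = r\<close> by (simp add: u cis_cnj)
  also have "\<dots> = u"
    by (simp add: cis_mult u)
  finally show ?thesis .
qed

lemma strip_kernel_reflect_lower_edge:
  assumes "Im w = 0" "Im u = 0"
  shows "u * strip_kernel \<theta> (w - z) = cnj (u * strip_kernel \<theta> (w - cnj z))"
proof -
  have "cnj u = u" "cnj w = w"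
    using assms by (simp_all add: complex_eq_iff)
  then show ?thesis
    by (simp add: strip_kernel_cnj)
qed

lemma strip_kernel_reflect_upper_edge:
  assumes "Im w = 1" "Im (cnj (cis \<theta>) * u) = 0"
  shows "u * strip_kernel \<theta> (w - z) = cnj (u * strip_kernel \<theta> (w - cnj z))"
proof -
  have "cnj w - z = (w - z) - 2 * \<i>"
    using assms(1) by (simp add: complex_eq_iff)
  then have "strip_kernel \<theta> (cnj w - z) = cis (2 * \<theta>) * strip_kernel \<theta> (w - z)"
    by (simp only: strip_kernel_shift)
  with cis_double_mult_cnj[OF assms(2)] show ?thesis
    by (simp add: strip_kernel_cnj mult.assoc[symmetric] mult.commute)
qed

section \<open>Scalar functions on a strip of width one\<close>

lemma contour_integral_rectpath:
  assumes "continuous_on (path_image (rectpath a1 a3)) f"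
  defines "a2 \<equiv> Complex (Re a3) (Im a1)" and "a4 \<equiv> Complex (Re a1) (Im a3)"
  shows "contour_integral (rectpath a1 a3) f =
    contour_integral (linepath a1 a2) f + contour_integral (linepath a2 a3) f +
    contour_integral (linepath a3 a4) f + contour_integral (linepath a4 a1) f"
proof -
  have rect: "rectpath a1 a3 = linepath a1 a2 +++ linepath a2 a3 +++ linepath a3 a4 +++ linepath a4 a1"
    by (simp add: rectpath_def a2_def a4_def Let_def)
  have image: "path_image (rectpath a1 a3) =
      closed_segment a1 a2 \<union> closed_segment a2 a3 \<union> closed_segment a3 a4 \<union> closed_segment a4 a1"
    unfolding rect by (simp add: path_image_join Un_assoc)
  have side: "(f has_contour_integral contour_integral (linepath p q) f) (linepath p q)"
    if "closed_segment p q \<subseteq> path_image (rectpath a1 a3)" for p q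
    using continuous_on_subset[OF assms(1) that]
    by (intro has_contour_integral_integral contour_integrable_continuous_linepath)
  have "(f has_contour_integral
      contour_integral (linepath a1 a2) f + (contour_integral (linepath a2 a3) f +
      (contour_integral (linepath a3 a4) f + contour_integral (linepath a4 a1) f))) (rectpath a1 a3)"
    unfolding rect by (intro has_contour_integral_join side valid_path_join) (auto simp: image)
  then show ?thesis
    by (simp add: contour_integral_unique add.assoc)
qed

lemma contour_integral_strip_rectpath:
  assumes "a \<le> b" and F: "continuous_on (path_image (rectpath (Complex a 0) (Complex b 1))) F"
  defines "H \<equiv> \<lambda>y. contour_integral (linepath (Complex a y) (Complex b y)) F"
    and "V \<equiv> \<lambda>x. contour_integral (linepath (Complex x 0) (Complex x 1)) F"
  shows "contour_integral (rectpath (Complex a 0) (Complex b 1)) F = H 0 + V b - H 1 - V a"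
proof -
  have "closed_segment (Complex a 1) (Complex b 1) \<subseteq> path_image (rectpath (Complex a 0) (Complex b 1))"
    "closed_segment (Complex a 0) (Complex a 1) \<subseteq> path_image (rectpath (Complex a 0) (Complex b 1))"
    using \<open>a \<le> b\<close> by (auto simp: path_image_rectpath_cbox_minus_box closed_segment_same_Im
        closed_segment_same_Re closed_segment_eq_real_ivl in_cbox_complex_iff in_box_complex_iff)
  then have "H 1 = - contour_integral (linepath (Complex b 1) (Complex a 1)) F"
    "V a = - contour_integral (linepath (Complex a 1) (Complex a 0)) F"
    unfolding H_def V_def by (auto intro: contour_integral_reverse_linepath continuous_on_subset[OF F])
  then show ?thesis
    using contour_integral_rectpath[OF F] by (simp add: H_def V_def)
qed

lemma contour_integral_linepath_cnj:
  assumes "Im p = Im q" and "g contour_integrable_on linepath p q"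
    and "\<And>w. w \<in> closed_segment p q \<Longrightarrow> f w = cnj (g w)"
  shows "contour_integral (linepath p q) f = cnj (contour_integral (linepath p q) g)"
proof -
  obtain I where "(g has_contour_integral I) (linepath p q)"
    using assms(2) by (auto simp: contour_integrable_on_def)
  then have "((\<lambda>x. g (linepath p q x) * (q - p)) has_integral I) {0..1}"
    by (simp add: has_contour_integral_linepath)
  moreover have "cnj (q - p) = q - p"
    using assms(1) by (simp add: complex_eq_iff)
  ultimately have "((cnj \<circ> (\<lambda>x. g (linepath p q x) * (q - p))) has_integral cnj I) {0..1}"
    by (simp only: has_integral_cnj)
  then have "((\<lambda>x. f (linepath p q x) * (q - p)) has_integral cnj I) {0..1}"
  proof (rule has_integral_eq[rotated])
    fix x :: real assume "x \<in> {0..1}"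
    then have "linepath p q x \<in> closed_segment p q"
      by (rule linepath_in_path)
    with assms(3) \<open>cnj (q - p) = q - p\<close>
    show "(cnj \<circ> (\<lambda>x. g (linepath p q x) * (q - p))) x = f (linepath p q x) * (q - p)"
      by simp
  qed
  then have "(f has_contour_integral cnj I) (linepath p q)"
    by (simp add: has_contour_integral_linepath)
  with \<open>(g has_contour_integral I) (linepath p q)\<close> show ?thesis
    by (simp add: contour_integral_unique)
qed

lemma strip_kernel_cauchy_formula:
  assumes cont: "continuous_on (cbox (Complex a 0) (Complex b 1)) g"
    and hol: "g holomorphic_on box (Complex a 0) (Complex b 1)"
    and z: "z \<in> box (Complex a 0) (Complex b 1)"
  shows "((\<lambda>w. g w * strip_kernel \<theta> (w - z)) has_contour_integral 2 * pi * \<i> * g z)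
           (rectpath (Complex a 0) (Complex b 1))"
proof -
  define S where "S = cbox (Complex a 0) (Complex b 1)"
  obtain h where h: "h holomorphic_on {w. \<bar>Im (w - z)\<bar> < 2}" "h z = 1"
    and h_eq: "\<And>w. \<bar>Im (w - z)\<bar> < 2 \<Longrightarrow> w \<noteq> z \<Longrightarrow> h w = (w - z) * strip_kernel \<theta> (w - z)"
    using strip_kernel_removable[where z = z and \<theta> = \<theta>] by blast
  have S_strip: "S \<subseteq> {w. \<bar>Im (w - z)\<bar> < 2}"
    using z by (auto simp: S_def in_cbox_complex_iff in_box_complex_iff)
  have path: "path_image (rectpath (Complex a 0) (Complex b 1)) \<subseteq> S - {z}"
    using z by (auto simp: S_def path_image_rectpath_cbox_minus_box in_box_complex_iff)
  have "continuous_on S (\<lambda>w. g w * h w)"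
    using h(1) S_strip unfolding S_def
    by (intro continuous_on_mult[OF cont] holomorphic_on_imp_continuous_on) (auto intro: holomorphic_on_subset)
  moreover have "(\<lambda>w. g w * h w) field_differentiable at x" if "x \<in> interior S" for x
  proof -
    have "(\<lambda>w. g w * h w) holomorphic_on interior S"
      using hol h(1) S_strip interior_subset[of S] unfolding S_def
      by (intro holomorphic_on_mult) (auto intro: holomorphic_on_subset)
    then show ?thesis
      using that by (simp add: holomorphic_on_imp_differentiable_at)
  qed
  ultimately have "((\<lambda>w. g w * h w / (w - z)) has_contour_integral
      2 * pi * \<i> * winding_number (rectpath (Complex a 0) (Complex b 1)) z * (g z * h z))
      (rectpath (Complex a 0) (Complex b 1))"
    using z path by (intro Cauchy_integral_formula_weak[of S "{}"]) (auto simp: S_def)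
  then have "((\<lambda>w. g w * h w / (w - z)) has_contour_integral 2 * pi * \<i> * g z)
      (rectpath (Complex a 0) (Complex b 1))"
    by (simp add: winding_number_rectpath[OF z] h(2))
  then show ?thesis
    by (rule has_contour_integral_eq) (use path S_strip h_eq in force)
qed

lemma strip_kernel_reflected_integral:
  assumes cont: "continuous_on (cbox (Complex a 0) (Complex b 1)) g"
    and hol: "g holomorphic_on box (Complex a 0) (Complex b 1)"
    and z: "z \<in> box (Complex a 0) (Complex b 1)"
  shows "((\<lambda>w. g w * strip_kernel \<theta> (w - cnj z)) has_contour_integral 0)
           (rectpath (Complex a 0) (Complex b 1))"
proof -
  define S where "S = cbox (Complex a 0) (Complex b 1)"
  have K: "(\<lambda>w. strip_kernel \<theta> (w - cnj z)) holomorphic_on S"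
    using z by (intro holomorphic_on_strip_kernel) (auto simp: S_def in_cbox_complex_iff in_box_complex_iff)
  show ?thesis
  proof (rule Cauchy_theorem_convex[of S _ "{}"])
    show "continuous_on S (\<lambda>w. g w * strip_kernel \<theta> (w - cnj z))"
      using K unfolding S_def by (intro continuous_on_mult[OF cont] holomorphic_on_imp_continuous_on)
    fix x assume "x \<in> interior S - {}"
    moreover have "(\<lambda>w. g w * strip_kernel \<theta> (w - cnj z)) holomorphic_on interior S"
      using hol K interior_subset[of S] unfolding S_def
      by (intro holomorphic_on_mult) (auto intro: holomorphic_on_subset)
    ultimately show "(\<lambda>w. g w * strip_kernel \<theta> (w - cnj z)) field_differentiable at x"
      by (simp add: holomorphic_on_imp_differentiable_at)
  qed (use z in \<open>auto simp: S_def path_image_rectpath_cbox_minus_box in_box_complex_iff\<close>)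
qed

lemma strip_kernel_representation:
  fixes g :: "complex \<Rightarrow> complex"
  assumes cont: "continuous_on (cbox (Complex a 0) (Complex b 1)) g"
    and hol: "g holomorphic_on box (Complex a 0) (Complex b 1)"
    and bottom: "\<And>x. x \<in> {a..b} \<Longrightarrow> Im (g (Complex x 0)) = 0"
    and top: "\<And>x. x \<in> {a..b} \<Longrightarrow> Im (cnj (cis \<theta>) * g (Complex x 1)) = 0"
    and z: "z \<in> box (Complex a 0) (Complex b 1)"
  defines "V \<equiv> \<lambda>x c. contour_integral (linepath (Complex x 0) (Complex x 1))
                       (\<lambda>w. g w * strip_kernel \<theta> (w - c))"
  shows "2 * pi * \<i> * g z = (V b z - cnj (V b (cnj z))) - (V a z - cnj (V a (cnj z)))"
proof -
  define R where "R = rectpath (Complex a 0) (Complex b 1)"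
  define F where "F = (\<lambda>c w. g w * strip_kernel \<theta> (w - c))"
  define H where "H = (\<lambda>y c. contour_integral (linepath (Complex a y) (Complex b y)) (F c))"
  have "a < b" and "0 < Im z" "Im z < 1"
    using z by (auto simp: in_box_complex_iff)
  have image: "path_image R = cbox (Complex a 0) (Complex b 1) - box (Complex a 0) (Complex b 1)"
    using \<open>a < b\<close> by (simp add: R_def path_image_rectpath_cbox_minus_box)
  have contF: "continuous_on (path_image R) (F c)" if "c = z \<or> c = cnj z" for c
  proof -
    have "(\<lambda>w. strip_kernel \<theta> (w - c)) holomorphic_on path_image R"
      using that z \<open>0 < Im z\<close> \<open>Im z < 1\<close> by (intro holomorphic_on_strip_kernel)
        (auto simp: image in_cbox_complex_iff in_box_complex_iff)
    then show ?thesis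
      using image unfolding F_def
      by (intro continuous_on_mult continuous_on_subset[OF cont] holomorphic_on_imp_continuous_on) auto
  qed
  have sides: "contour_integral R (F c) = H 0 c + V b c - H 1 c - V a c" if "c = z \<or> c = cnj z" for c
    using contour_integral_strip_rectpath[OF _ contF[OF that, unfolded R_def]] \<open>a < b\<close>
    by (simp add: R_def H_def V_def F_def)
  have horizontal: "H y z = cnj (H y (cnj z))" if "y = 0 \<or> y = 1" for y
    unfolding H_def
  proof (rule contour_integral_linepath_cnj)
    have "closed_segment (Complex a y) (Complex b y) \<subseteq> path_image R"
      using that \<open>a < b\<close> by (auto simp: image closed_segment_same_Im closed_segment_eq_real_ivl
          in_cbox_complex_iff in_box_complex_iff)
    then show "F (cnj z) contour_integrable_on linepath (Complex a y) (Complex b y)"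
      using continuous_on_subset[OF contF] by (intro contour_integrable_continuous_linepath) auto
    fix w assume "w \<in> closed_segment (Complex a y) (Complex b y)"
    then have w: "Im w = y" "w = Complex (Re w) y" "Re w \<in> {a..b}"
      using \<open>a < b\<close> by (auto simp: closed_segment_same_Im closed_segment_eq_real_ivl complex_eq_iff)
    from w(2) have "g w = g (Complex (Re w) y)"
      by (rule arg_cong)
    with that bottom[OF w(3)] top[OF w(3)] show "F z w = cnj (F (cnj z) w)"
      unfolding F_def using strip_kernel_reflect_lower_edge strip_kernel_reflect_upper_edge w(1)
      by metis
  qed simp
  have "2 * pi * \<i> * g z = contour_integral R (F z) - cnj (contour_integral R (F (cnj z)))"
    using contour_integral_unique[OF strip_kernel_cauchy_formula[OF cont hol z]]
      contour_integral_unique[OF strip_kernel_reflected_integral[OF cont hol z]]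
    by (simp add: R_def F_def)
  also have "\<dots> = (V b z - cnj (V b (cnj z))) - (V a z - cnj (V a (cnj z)))"
    by (simp add: sides horizontal)
  finally show ?thesis .
qed

lemma norm_side_integral_le:
  fixes g :: "complex \<Rightarrow> complex"
  assumes cont: "continuous_on (closed_segment (Complex x 0) (Complex x 1)) g"
    and c: "\<bar>Im c\<bar> < 1" "Re c \<noteq> x"
    and g_le: "\<And>y. y \<in> {0..1} \<Longrightarrow> norm (g (Complex x y)) \<le> M"
    and K_le: "\<And>y. y \<in> {0..1} \<Longrightarrow> norm (strip_kernel \<theta> (Complex x y - c)) \<le> K"
  shows "norm (contour_integral (linepath (Complex x 0) (Complex x 1))
           (\<lambda>w. g w * strip_kernel \<theta> (w - c))) \<le> M * K"
proof -
  have side: "closed_segment (Complex x 0) (Complex x 1) = {Complex x y | y. y \<in> {0..1}}"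
    by (auto simp: closed_segment_same_Re closed_segment_eq_real_ivl complex_eq_iff)
  have "0 \<le> M" "0 \<le> K"
    using g_le[of 0] K_le[of 0] by (auto intro: order_trans[OF norm_ge_zero])
  have "(\<lambda>w. strip_kernel \<theta> (w - c)) holomorphic_on closed_segment (Complex x 0) (Complex x 1)"
    using c by (intro holomorphic_on_strip_kernel) (auto simp: side complex_eq_iff)
  then have "(\<lambda>w. g w * strip_kernel \<theta> (w - c)) contour_integrable_on linepath (Complex x 0) (Complex x 1)"
    by (intro contour_integrable_continuous_linepath continuous_on_mult cont holomorphic_on_imp_continuous_on)
  then have "norm (contour_integral (linepath (Complex x 0) (Complex x 1)) (\<lambda>w. g w * strip_kernel \<theta> (w - c)))
      \<le> M * K * norm (Complex x 1 - Complex x 0)"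
    using \<open>0 \<le> M\<close> \<open>0 \<le> K\<close> g_le K_le
    by (intro contour_integral_bound_linepath) (auto simp: side norm_mult intro: mult_mono)
  also have "norm (Complex x 1 - Complex x 0) = 1"
    by (simp add: cmod_def)
  finally show ?thesis
    by simp
qed

lemma strip_interior_bound:
  fixes g :: "complex \<Rightarrow> complex"
  assumes cont: "continuous_on (cbox (Complex a 0) (Complex b 1)) g"
    and hol: "g holomorphic_on box (Complex a 0) (Complex b 1)"
    and bottom: "\<And>x. x \<in> {a..b} \<Longrightarrow> Im (g (Complex x 0)) = 0"
    and top: "\<And>x. x \<in> {a..b} \<Longrightarrow> Im (cnj (cis \<theta>) * g (Complex x 1)) = 0"
    and sides: "\<And>y. y \<in> {0..1} \<Longrightarrow> norm (g (Complex a y)) \<le> M \<and> norm (g (Complex b y)) \<le> M"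
    and z: "z \<in> box (Complex a 0) (Complex b 1)" "a + 1 \<le> Re z" "Re z \<le> b - 1"
  shows "norm (g z) \<le> M * (exp (- \<theta> * (b - Re z)) + exp (- (pi - \<theta>) * (Re z - a))) / (1 - exp (- pi))"
proof -
  define V where "V = (\<lambda>x c. contour_integral (linepath (Complex x 0) (Complex x 1))
                       (\<lambda>w. g w * strip_kernel \<theta> (w - c)))"
  define Kb where "Kb = pi * exp (- \<theta> * (b - Re z)) / (1 - exp (- pi))"
  define Ka where "Ka = pi * exp (- (pi - \<theta>) * (Re z - a)) / (1 - exp (- pi))"
  have c: "\<bar>Im c\<bar> < 1" "Re c = Re z" if "c = z \<or> c = cnj z" for c
    using that z(1) by (auto simp: in_box_complex_iff)
  have cont_side: "continuous_on (closed_segment (Complex x 0) (Complex x 1)) g" if "x = a \<or> x = b" for x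
    using that z by (intro continuous_on_subset[OF cont])
      (auto simp: closed_segment_same_Re closed_segment_eq_real_ivl in_cbox_complex_iff)
  have right: "norm (V b c) \<le> M * Kb" if "c = z \<or> c = cnj z" for c
    unfolding V_def Kb_def using c[OF that] sides z norm_strip_kernel_le_right[of "Complex b _ - c" \<theta>]
    by (intro norm_side_integral_le cont_side) auto
  have left: "norm (V a c) \<le> M * Ka" if "c = z \<or> c = cnj z" for c
    unfolding V_def Ka_def using c[OF that] sides z norm_strip_kernel_le_left[of "Complex a _ - c" \<theta>]
    by (intro norm_side_integral_le cont_side) (auto simp: algebra_simps)
  have "2 * pi * norm (g z) = norm (2 * pi * \<i> * g z)"
    by (simp add: norm_mult)
  also have "\<dots> = norm ((V b z - cnj (V b (cnj z))) - (V a z - cnj (V a (cnj z))))"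
    unfolding V_def by (simp only: strip_kernel_representation[OF cont hol bottom top z(1)])
  also have "\<dots> \<le> (norm (V b z) + norm (V b (cnj z))) + (norm (V a z) + norm (V a (cnj z)))"
    by (intro norm_triangle_le_diff add_mono) simp_all
  also have "\<dots> \<le> 2 * (M * Kb) + 2 * (M * Ka)"
    using right[of z] right[of "cnj z"] left[of z] left[of "cnj z"] by simp
  also have "\<dots> = 2 * pi * (M * (exp (- \<theta> * (b - Re z)) + exp (- (pi - \<theta>) * (Re z - a))) / (1 - exp (- pi)))"
    by (simp add: Kb_def Ka_def add_divide_distrib distrib_left ac_simps)
  finally show ?thesis
    by (rule mult_left_le_imp_le) simp
qed

lemma rect_eq_cbox: "rect a b c d = cbox (Complex a c) (Complex b d)"
  by (auto simp: rect_def in_cbox_complex_iff)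

lemma open_rect_eq_box: "open_rect a b c d = box (Complex a c) (Complex b d)"
  by (auto simp: open_rect_def in_box_complex_iff)

lemma strip_interior_decay:
  fixes g :: "complex \<Rightarrow> complex"
  assumes cont: "continuous_on (rect a b 0 1) g"
    and hol: "g holomorphic_on open_rect a b 0 1"
    and bottom: "\<And>x. x \<in> {a..b} \<Longrightarrow> Im (g (Complex x 0)) = 0"
    and top: "\<And>x. x \<in> {a..b} \<Longrightarrow> Im (cnj (cis \<theta>) * g (Complex x 1)) = 0"
    and sides: "\<And>y. y \<in> {0..1} \<Longrightarrow> norm (g (Complex (a + 1) y)) \<le> M \<and> norm (g (Complex (b - 1) y)) \<le> M"
    and \<delta>: "0 < \<delta>" "\<delta> \<le> \<theta>" "\<delta> \<le> pi - \<theta>"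
    and s: "a + 2 \<le> s" "s \<le> b - 2" and t: "0 < t" "t < 1"
  shows "norm (g (Complex s t)) \<le> 2 * exp pi / (1 - exp (- pi)) * M * exp (- \<delta> * min (s - a) (b - s))"
proof -
  define d where "d = min (s - a) (b - s)"
  have "0 \<le> M"
    using sides[of 0] by (meson atLeastAtMost_iff norm_ge_zero order_trans zero_le_one order_refl)
  have "norm (g (Complex s t)) \<le> M * (exp (- \<theta> * ((b - 1) - Re (Complex s t))) +
      exp (- (pi - \<theta>) * (Re (Complex s t) - (a + 1)))) / (1 - exp (- pi))"
  proof (rule strip_interior_bound)
    show "continuous_on (cbox (Complex (a + 1) 0) (Complex (b - 1) 1)) g"
      using cont by (rule continuous_on_subset) (auto simp: rect_eq_cbox in_cbox_complex_iff)
    show "g holomorphic_on box (Complex (a + 1) 0) (Complex (b - 1) 1)"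
      using hol by (rule holomorphic_on_subset) (auto simp: open_rect_eq_box in_box_complex_iff)
  qed (use s t sides bottom top in \<open>auto simp: in_box_complex_iff\<close>)
  then have "norm (g (Complex s t)) \<le>
      M * (exp (- \<theta> * ((b - 1) - s)) + exp (- (pi - \<theta>) * (s - (a + 1)))) / (1 - exp (- pi))"
    by simp
  also have "\<dots> \<le> M * (2 * exp (pi - \<delta> * d)) / (1 - exp (- pi))"
  proof -
    have d: "d \<le> s - a" "d \<le> b - s"
      by (auto simp: d_def)
    have "- \<theta> * ((b - 1) - s) \<le> pi - \<delta> * d"
      using mult_right_mono[OF \<delta>(2), of "(b - 1) - s"] mult_left_mono[OF d(2), of \<delta>] \<delta> s
      by (simp add: algebra_simps)
    moreover have "- (pi - \<theta>) * (s - (a + 1)) \<le> pi - \<delta> * d"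
      using mult_right_mono[OF \<delta>(3), of "s - (a + 1)"] mult_left_mono[OF d(1), of \<delta>] \<delta> s
      by (simp add: algebra_simps)
    ultimately have "exp (- \<theta> * ((b - 1) - s)) + exp (- (pi - \<theta>) * (s - (a + 1))) \<le> 2 * exp (pi - \<delta> * d)"
      by (metis add_mono exp_le_cancel_iff mult_2)
    then show ?thesis
      using \<open>0 \<le> M\<close> by (intro divide_right_mono mult_left_mono) auto
  qed
  also have "exp (pi - \<delta> * d) = exp pi * exp (- \<delta> * d)"
    by (simp add: mult_exp_exp)
  also have "M * (2 * (exp pi * exp (- \<delta> * d))) / (1 - exp (- pi)) =
      2 * exp pi / (1 - exp (- pi)) * M * exp (- \<delta> * d)"
    by (simp add: mult_ac)
  finally show ?thesis
    by (simp add: d_def)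
qed

lemma le_strip_constant_mult_exp:
  assumes "0 \<le> M" "x \<le> pi"
  shows "M \<le> 2 * exp pi / (1 - exp (- pi)) * M * exp (- x)"
proof -
  define C where "C = 2 * exp pi / (1 - exp (- pi))"
  have "0 < 1 - exp (- pi)" "1 - exp (- pi) \<le> 1"
    by auto
  then have "1 \<le> 2 / (1 - exp (- pi))"
    by (simp add: field_simps)
  also have "\<dots> = C * exp (- pi)"
    by (simp add: C_def exp_minus)
  also have "\<dots> \<le> C * exp (- x)"
    using assms(2) \<open>0 < 1 - exp (- pi)\<close> by (intro mult_left_mono) (auto simp: C_def)
  finally have "1 * M \<le> C * exp (- x) * M"
    using assms(1) by (rule mult_right_mono)
  then show ?thesis
    by (simp add: C_def ac_simps)
qed

lemma strip_exponential_decay: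
  fixes g :: "complex \<Rightarrow> complex"
  assumes "2 < b - a"
    and cont: "continuous_on (rect a b 0 1) g"
    and hol: "g holomorphic_on open_rect a b 0 1"
    and bottom: "\<And>x. x \<in> {a..b} \<Longrightarrow> Im (g (Complex x 0)) = 0"
    and top: "\<And>x. x \<in> {a..b} \<Longrightarrow> Im (cnj (cis \<theta>) * g (Complex x 1)) = 0"
    and ends: "\<And>z. z \<in> rect a (a + 2) 0 1 \<union> rect (b - 2) b 0 1 \<Longrightarrow> norm (g z) \<le> M"
    and \<delta>: "0 < \<delta>" "\<delta> \<le> \<theta>" "\<delta> \<le> pi - \<theta>"
    and st: "s \<in> {a..b}" "t \<in> {0..1}"
  shows "norm (g (Complex s t)) \<le> 2 * exp pi / (1 - exp (- pi)) * M * exp (- \<delta> * min (s - a) (b - s))"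
proof -
  define C where "C = 2 * exp pi / (1 - exp (- pi))"
  define d where "d = min (s - a) (b - s)"
  have "0 \<le> M"
    using ends[of "Complex a 0"] by (auto simp: rect_def intro: order_trans[OF norm_ge_zero])
  show ?thesis
  proof (cases "a + 2 < s \<and> s < b - 2")
    case True
    have "norm (g (Complex s \<tau>)) \<le> C * M * exp (- \<delta> * d)" if "\<tau> \<in> {0<..<1}" for \<tau>
      unfolding C_def d_def using True that \<delta> bottom top ends
      by (intro strip_interior_decay[OF cont hol]) (auto simp: rect_def)
    moreover have "continuous_on {0..1} (\<lambda>\<tau>. norm (g (Complex s \<tau>)))"
    proof (intro continuous_on_norm continuous_on_compose2[OF cont])
      show "continuous_on {0..1} (\<lambda>\<tau>. Complex s \<tau>)"
        unfolding Complex_eq by (intro continuous_intros)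
    qed (use st in \<open>auto simp: rect_def\<close>)
    ultimately show ?thesis
      using continuous_le_on_closure[of "{0<..<1}" "\<lambda>\<tau>. norm (g (Complex s \<tau>))"] st
      by (simp add: C_def d_def)
  next
    case False
    then have "norm (g (Complex s t)) \<le> M"
      using ends st by (auto simp: rect_def)
    also have "\<dots> \<le> C * M * exp (- (\<delta> * d))"
    proof -
      have "\<delta> * d \<le> pi / 2 * 2"
        using False st \<delta> by (intro mult_mono) (auto simp: d_def)
      then show ?thesis
        unfolding C_def using \<open>0 \<le> M\<close> by (intro le_strip_constant_mult_exp) auto
    qed
    finally show ?thesis
      by (simp add: C_def d_def)
  qed
qed

section \<open>Linear algebra\<close>

lemma linear_coefficient_eq_0_if_quadratic_nonpos:
  fixes A B :: real
  assumes "\<And>e. e * A + e\<^sup>2 * B \<le> 0"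
  shows "A = 0"
proof (rule ccontr)
  assume "A \<noteq> 0"
  define c where "c = \<bar>B\<bar> + 1"
  have "0 < c"
    by (simp add: c_def)
  define e where "e = A / (2 * c)"
  have "- c \<le> B"
    by (simp add: c_def)
  have "0 < A\<^sup>2 / (4 * c)"
    using \<open>A \<noteq> 0\<close> \<open>0 < c\<close> by simp
  also have "A\<^sup>2 / (4 * c) = e * A - e\<^sup>2 * c"
    using \<open>0 < c\<close> by (simp add: e_def power2_eq_square field_simps)
  also have "\<dots> \<le> e * A + e\<^sup>2 * B"
    using mult_left_mono[OF \<open>- c \<le> B\<close> zero_le_power2[of e]] by simp
  finally show False
    using assms[of e] by simp
qed

lemma self_adjoint_maximizer_is_eigenvector:
  fixes S :: "'a::euclidean_space \<Rightarrow> 'a"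
  assumes S: "linear S" and W: "subspace W" "\<And>w. w \<in> W \<Longrightarrow> S w \<in> W"
    and sym: "\<And>v w. v \<in> W \<Longrightarrow> w \<in> W \<Longrightarrow> S v \<bullet> w = v \<bullet> S w"
    and v: "v \<in> W" "norm v = 1" and max: "\<And>w. w \<in> W \<Longrightarrow> S w \<bullet> w \<le> (S v \<bullet> v) * (norm w)\<^sup>2"
  shows "S v = (S v \<bullet> v) *\<^sub>R v"
proof -
  define m where "m = S v \<bullet> v"
  have stationary: "S v \<bullet> w = m * (v \<bullet> w)" if "w \<in> W" for w
  proof -
    have "e * (2 * (S v \<bullet> w - m * (v \<bullet> w))) + e\<^sup>2 * (S w \<bullet> w - m * (norm w)\<^sup>2) \<le> 0" for e
    proof -
      have "S (v + e *\<^sub>R w) \<bullet> (v + e *\<^sub>R w) \<le> m * (norm (v + e *\<^sub>R w))\<^sup>2"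
        using W(1) v that unfolding m_def by (intro max) (simp add: subspace_add subspace_scale)
      moreover have "S (v + e *\<^sub>R w) \<bullet> (v + e *\<^sub>R w) = m + 2 * e * (S v \<bullet> w) + e\<^sup>2 * (S w \<bullet> w)"
        using sym[OF that v(1)]
        by (simp add: m_def linear_add[OF S] linear_scale[OF S] inner_add_left inner_add_right
            inner_commute power2_eq_square algebra_simps)
      moreover have "v \<bullet> v = 1"
        using v(2) by (simp add: dot_square_norm)
      then have "(norm (v + e *\<^sub>R w))\<^sup>2 = 1 + 2 * e * (v \<bullet> w) + e\<^sup>2 * (norm w)\<^sup>2"
        by (simp only: power2_norm_eq_inner)
          (simp add: inner_add_left inner_add_right inner_commute power2_eq_square algebra_simps)
      ultimately show ?thesis
        by (simp add: algebra_simps)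
    qed
    then show ?thesis
      using linear_coefficient_eq_0_if_quadratic_nonpos by fastforce
  qed
  have "S v - m *\<^sub>R v \<in> W"
    using W v by (simp add: subspace_diff subspace_scale)
  then have "(S v - m *\<^sub>R v) \<bullet> (S v - m *\<^sub>R v) = 0"
    using stationary by (simp add: inner_diff_left)
  then show ?thesis
    by (simp add: m_def)
qed

lemma self_adjoint_has_eigenvector:
  fixes S :: "'a::euclidean_space \<Rightarrow> 'a"
  assumes S: "linear S" and W: "subspace W" "W \<noteq> {0}" "\<And>w. w \<in> W \<Longrightarrow> S w \<in> W"
    and sym: "\<And>v w. v \<in> W \<Longrightarrow> w \<in> W \<Longrightarrow> S v \<bullet> w = v \<bullet> S w"
  shows "\<exists>v\<in>W. v \<noteq> 0 \<and> (\<exists>\<mu>. S v = \<mu> *\<^sub>R v)"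
proof -
  have "compact (sphere 0 1 \<inter> W)"
    using W(1) by (intro compact_Int_closed closed_subspace) auto
  moreover have "sphere 0 1 \<inter> W \<noteq> {}"
  proof -
    obtain w where "w \<in> W" "w \<noteq> 0"
      using W(1,2) subspace_0 by blast
    then have "(1 / norm w) *\<^sub>R w \<in> sphere 0 1 \<inter> W"
      using W(1) by (simp add: subspace_scale)
    then show ?thesis
      by blast
  qed
  moreover have "continuous_on (sphere 0 1 \<inter> W) (\<lambda>v. S v \<bullet> v)"
    using S by (intro continuous_intros linear_continuous_on) (simp add: linear_conv_bounded_linear)
  ultimately obtain v where "v \<in> sphere 0 1 \<inter> W"
    and v_max: "\<And>w. w \<in> sphere 0 1 \<inter> W \<Longrightarrow> S w \<bullet> w \<le> S v \<bullet> v"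
    using continuous_attains_sup[of "sphere 0 1 \<inter> W" "\<lambda>v. S v \<bullet> v"] by blast
  then have v: "v \<in> W" "norm v = 1"
    by auto
  have "S w \<bullet> w \<le> (S v \<bullet> v) * (norm w)\<^sup>2" if "w \<in> W" for w
  proof (cases "w = 0")
    case False
    have "(1 / norm w) *\<^sub>R w \<in> sphere 0 1 \<inter> W"
      using False W(1) that by (simp add: subspace_scale)
    then have "S ((1 / norm w) *\<^sub>R w) \<bullet> ((1 / norm w) *\<^sub>R w) \<le> S v \<bullet> v"
      by (rule v_max)
    then show ?thesis
      using False by (simp add: linear_scale[OF S] power2_eq_square field_simps)
  qed (simp add: linear_0[OF S])
  then have "S v = (S v \<bullet> v) *\<^sub>R v"
    using self_adjoint_maximizer_is_eigenvector[OF S W(1,3) sym v] by blast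
  moreover have "v \<noteq> 0"
    using v(2) by auto
  ultimately show ?thesis
    using v(1) by blast
qed

lemma self_adjoint_eigenvectors_span:
  fixes S :: "'a::euclidean_space \<Rightarrow> 'a"
  assumes S: "linear S" and V: "subspace V" "\<And>v. v \<in> V \<Longrightarrow> S v \<in> V"
    and sym: "\<And>v w. v \<in> V \<Longrightarrow> w \<in> V \<Longrightarrow> S v \<bullet> w = v \<bullet> S w"
  shows "V \<subseteq> span {v \<in> V. \<exists>\<mu>. S v = \<mu> *\<^sub>R v}"
proof
  define E where "E = {v \<in> V. \<exists>\<mu>. S v = \<mu> *\<^sub>R v}"
  define W where "W = {w \<in> V. \<forall>e\<in>E. w \<bullet> e = 0}"
  have "subspace W"
    using V(1) by (auto simp: W_def subspace_def inner_add_left)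
  moreover have invariant: "S w \<in> W" if "w \<in> W" for w
  proof -
    have "S w \<bullet> e = 0" if "e \<in> E" for e
    proof -
      obtain \<mu> where "e \<in> V" "S e = \<mu> *\<^sub>R e"
        using \<open>e \<in> E\<close> by (auto simp: E_def)
      then show ?thesis
        using sym[of w e] \<open>w \<in> W\<close> \<open>e \<in> E\<close> by (simp add: W_def)
    qed
    with that V(2) show ?thesis
      by (simp add: W_def)
  qed
  moreover have "S v \<bullet> w = v \<bullet> S w" if "v \<in> W" "w \<in> W" for v w
    using sym that by (simp add: W_def)
  ultimately have False if "W \<noteq> {0}"
    using self_adjoint_has_eigenvector[OF S _ that] by (fastforce simp: W_def E_def)
  then have "W = {0}"
    by blast
  fix x assume "x \<in> V"
  obtain y z where y: "y \<in> span E" and z: "\<And>w. w \<in> span E \<Longrightarrow> orthogonal z w" and "x = y + z"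
    using orthogonal_subspace_decomp_exists[of E x] by blast
  have "span E \<subseteq> V"
    using V(1) by (auto simp: E_def span_minimal)
  moreover have "z = x - y"
    using \<open>x = y + z\<close> by simp
  ultimately have "z \<in> W"
    using \<open>x \<in> V\<close> y z V(1) by (auto simp: W_def orthogonal_def subspace_diff span_base)
  with \<open>W = {0}\<close> \<open>x = y + z\<close> y show "x \<in> span E"
    by simp
qed

lemma direct_sum_decomposition:
  fixes S T :: "'a::euclidean_space set"
  assumes "subspace S" "subspace T" "dim S + dim T = DIM('a)" "S \<inter> T = {0}"
  obtains x y where "x \<in> S" "y \<in> T" "v = x + y"
proof -
  let ?ST = "{x + y |x y. x \<in> S \<and> y \<in> T}"
  have "dim ?ST + dim (S \<inter> T) = dim S + dim T"
    using assms(1,2) by (rule dim_sums_Int)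
  moreover have "dim (S \<inter> T) = 0"
    using assms(4) by (metis dim_empty dim_span span_empty)
  ultimately have "span ?ST = UNIV"
    using assms(3) by (simp add: dim_eq_full)
  moreover have "span ?ST = ?ST"
    using assms(1,2) by (simp add: span_eq_iff subspace_sums)
  ultimately show ?thesis
    using that by blast
qed

lemma norm_le_mult_positive_homogeneous:
  fixes h :: "'a::euclidean_space \<Rightarrow> real"
  assumes "continuous_on UNIV h" and h_scale: "\<And>c v. h (c *\<^sub>R v) = \<bar>c\<bar> * h v"
    and h_pos: "\<And>v. v \<noteq> 0 \<Longrightarrow> 0 < h v"
  shows "\<exists>K>0. \<forall>v. norm v \<le> K * h v"
proof -
  obtain v0 where v0: "v0 \<in> sphere 0 1" and min: "\<And>v. v \<in> sphere 0 1 \<Longrightarrow> h v0 \<le> h v"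
    using continuous_attains_inf[OF compact_sphere _ continuous_on_subset[OF assms(1) subset_UNIV],
        of 0 1] by auto
  then have "0 < h v0"
    using h_pos v0 by (metis mem_sphere_0 norm_zero zero_neq_one)
  have "norm v \<le> 1 / h v0 * h v" for v
  proof (cases "v = 0")
    case True
    then show ?thesis
      using h_scale[of 0 v] by simp
  next
    case False
    then have "h v0 \<le> h ((1 / norm v) *\<^sub>R v)"
      by (intro min) simp
    then show ?thesis
      using False \<open>0 < h v0\<close> by (simp add: h_scale field_simps)
  qed
  with \<open>0 < h v0\<close> show ?thesis
    by (intro exI[of _ "1 / h v0"]) simp
qed

section \<open>Transversal Lagrangian subspaces\<close>

definition imul :: "complex ^ 'n \<Rightarrow> complex ^ 'n" where
  "imul v = (\<chi> i. \<i> * v $ i)"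

definition cinner :: "complex ^ 'n \<Rightarrow> complex ^ 'n \<Rightarrow> complex" where
  "cinner u v = (\<Sum>i\<in>UNIV. cnj (u $ i) * v $ i)"

lemma imul_nth [simp]: "imul v $ i = \<i> * v $ i"
  by (simp add: imul_def)

lemma imul_0 [simp]: "imul 0 = 0"
  by (simp add: vec_eq_iff)

lemma linear_imul: "linear imul"
  by (rule linearI) (auto simp: vec_eq_iff algebra_simps)

lemma imul_imul [simp]: "imul (imul v) = - v"
  by (simp add: vec_eq_iff)

lemma inner_imul_imul [simp]: "imul u \<bullet> imul v = u \<bullet> v"
  by (simp add: inner_vec_def inner_complex_def algebra_simps)

lemma inner_imul_right: "u \<bullet> imul v = - (imul u \<bullet> v)"
  by (simp add: inner_vec_def inner_complex_def algebra_simps sum_negf[symmetric])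

lemma Re_cinner: "Re (cinner u v) = u \<bullet> v"
  by (simp add: cinner_def inner_vec_def inner_complex_def Re_sum)

lemma Im_cinner: "Im (cinner u v) = imul u \<bullet> v"
  by (simp add: cinner_def inner_vec_def inner_complex_def Im_sum algebra_simps)

lemma std_omega_eq_inner: "std_omega u v = imul u \<bullet> v"
  by (simp add: std_omega_def inner_vec_def inner_complex_def)

lemma cinner_0_left [simp]: "cinner 0 v = 0"
  by (simp add: cinner_def)

lemma cinner_add_left: "cinner (u + w) v = cinner u v + cinner w v"
  by (simp add: cinner_def algebra_simps sum.distrib)

lemma cinner_scaleR_left: "cinner (c *\<^sub>R u) v = of_real c * cinner u v"
  by (simp add: cinner_def sum_distrib_left algebra_simps scaleR_conv_of_real[where 'a = complex])

lemma cinner_scaleR_right: "cinner u (c *\<^sub>R v) = of_real c * cinner u v"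
  by (simp add: cinner_def sum_distrib_left algebra_simps scaleR_conv_of_real[where 'a = complex])

lemma cinner_imul_left: "cinner (imul u) v = - \<i> * cinner u v"
  by (simp add: cinner_def sum_distrib_left algebra_simps)

lemma norm_cinner_le: "norm (cinner u v) \<le> (\<Sum>i\<in>UNIV. norm (u $ i)) * norm v"
proof -
  have "norm (cinner u v) \<le> (\<Sum>i\<in>UNIV. norm (cnj (u $ i) * v $ i))"
    unfolding cinner_def by (rule norm_sum)
  also have "\<dots> \<le> (\<Sum>i\<in>UNIV. norm (u $ i) * norm v)"
    unfolding norm_mult complex_mod_cnj by (intro sum_mono mult_left_mono) (auto simp: Finite_Cartesian_Product.norm_nth_le)
  finally show ?thesis
    by (simp add: sum_distrib_right)
qed

lemma continuous_on_cinner [continuous_intros]: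
  "continuous_on S f \<Longrightarrow> continuous_on S (\<lambda>x. cinner u (f x))"
  unfolding cinner_def by (intro continuous_intros)

lemma lagrangian_imul_inner_eq_0:
  "lagrangian_subspace L \<Longrightarrow> u \<in> L \<Longrightarrow> v \<in> L \<Longrightarrow> imul u \<bullet> v = 0"
  unfolding lagrangian_subspace_def by (metis std_omega_eq_inner)

lemma lagrangian_decomposition:
  fixes L :: "(complex ^ 'n) set"
  assumes L: "lagrangian_subspace L"
  obtains x y where "x \<in> L" "y \<in> L" "v = x + imul y"
proof -
  have "subspace L" and "dim L = CARD('n)"
    using L by (auto simp: lagrangian_subspace_def)
  have "inj imul"
    by (metis imul_imul injI minus_equation_iff)
  have image: "subspace (imul ` L)"
    using linear_imul \<open>subspace L\<close> by (rule linear_subspace_image)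
  have "dim (imul ` L) = dim L"
    using dim_image_eq[OF linear_imul inj_on_subset[OF \<open>inj imul\<close> subset_UNIV]] .
  then have dims: "dim L + dim (imul ` L) = DIM(complex ^ 'n)"
    using \<open>dim L = CARD('n)\<close> by simp
  have "x = 0" if "x \<in> L" "y \<in> L" "x = imul y" for x y
    using lagrangian_imul_inner_eq_0[OF L that(2,1)] that(3) by simp
  moreover have "0 \<in> L \<inter> imul ` L"
    using \<open>subspace L\<close> by (metis IntI imul_0 image_eqI subspace_0)
  ultimately have "L \<inter> imul ` L = {0}"
    by blast
  then obtain x w where "x \<in> L" "w \<in> imul ` L" "v = x + w"
    using direct_sum_decomposition[OF \<open>subspace L\<close> image dims] by blast
  then show ?thesis
    using that by blast
qed

lemma lagrangian_graph_map:
  fixes \<Lambda> \<Lambda>' :: "(complex ^ 'n) set"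
  assumes L: "lagrangian_subspace \<Lambda>" and L': "lagrangian_subspace \<Lambda>'" and tr: "\<Lambda> \<inter> \<Lambda>' = {0}"
  obtains S where "linear S" "\<And>y. y \<in> \<Lambda> \<Longrightarrow> S y \<in> \<Lambda>" "\<And>y. y \<in> \<Lambda> \<Longrightarrow> S y + imul y \<in> \<Lambda>'"
proof -
  have sub: "subspace \<Lambda>" "subspace \<Lambda>'" and dims: "dim \<Lambda> + dim \<Lambda>' = DIM(complex ^ 'n)"
    using L L' by (auto simp: lagrangian_subspace_def)
  have "\<exists>x. x \<in> \<Lambda> \<and> x + imul y \<in> \<Lambda>'" for y
  proof -
    obtain x w where "x \<in> \<Lambda>" "w \<in> \<Lambda>'" "imul y = x + w"
      using direct_sum_decomposition[OF sub dims tr] by metis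
    then show ?thesis
      using sub(1) by (intro exI[of _ "- x"]) (simp add: subspace_neg)
  qed
  then obtain f where f: "\<And>y. f y \<in> \<Lambda> \<and> f y + imul y \<in> \<Lambda>'"
    by metis
  obtain B where "B \<subseteq> \<Lambda>" "independent B" "\<Lambda> \<subseteq> span B"
    by (rule maximal_independent_subset)
  then obtain S where S: "linear S" "\<And>y. y \<in> B \<Longrightarrow> S y = f y"
    using linear_independent_extend by metis
  have add: "S x + S y + imul (x + y) = (S x + imul x) + (S y + imul y)" for x y
    by (simp add: linear_add[OF linear_imul])
  have scale: "c *\<^sub>R S x + imul (c *\<^sub>R x) = c *\<^sub>R (S x + imul x)" for c x
    by (simp add: linear_scale[OF linear_imul] scaleR_add_right)
  have closed: "subspace {y. S y \<in> \<Lambda> \<and> S y + imul y \<in> \<Lambda>'}"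
    unfolding subspace_def using sub
    by (simp add: add scale linear_0[OF S(1)] linear_add[OF S(1)] linear_scale[OF S(1)]
        subspace_0 subspace_add subspace_scale)
  have "S y \<in> \<Lambda> \<and> S y + imul y \<in> \<Lambda>'" if "y \<in> \<Lambda>" for y
    by (rule span_induct[OF _ closed]) (use that \<open>\<Lambda> \<subseteq> span B\<close> f S(2) in auto)
  with S(1) show ?thesis
    using that by blast
qed

lemma lagrangian_graph_map_symmetric:
  fixes \<Lambda> \<Lambda>' :: "(complex ^ 'n) set"
  assumes L: "lagrangian_subspace \<Lambda>" and L': "lagrangian_subspace \<Lambda>'"
    and S: "\<And>y. y \<in> \<Lambda> \<Longrightarrow> S y \<in> \<Lambda>" "\<And>y. y \<in> \<Lambda> \<Longrightarrow> S y + imul y \<in> \<Lambda>'"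
    and xy: "x \<in> \<Lambda>" "y \<in> \<Lambda>"
  shows "S x \<bullet> y = x \<bullet> S y"
proof -
  have "imul (S x + imul x) \<bullet> (S y + imul y) = 0"
    using lagrangian_imul_inner_eq_0[OF L' S(2)[OF xy(1)] S(2)[OF xy(2)]] .
  moreover have "imul (S x) \<bullet> S y = 0"
    using lagrangian_imul_inner_eq_0[OF L S(1)[OF xy(1)] S(1)[OF xy(2)]] .
  moreover have "x \<bullet> imul y = 0"
    using lagrangian_imul_inner_eq_0[OF L xy] by (simp add: inner_imul_right)
  moreover have "imul (S x + imul x) = imul (S x) - x"
    by (simp add: linear_add[OF linear_imul])
  ultimately show ?thesis
    by (simp add: inner_add_right inner_diff_left)
qed

lemma lagrangian_pair_eigenbasis:
  fixes \<Lambda> \<Lambda>' :: "(complex ^ 'n) set"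
  assumes L: "lagrangian_subspace \<Lambda>" and L': "lagrangian_subspace \<Lambda>'" and tr: "transversal \<Lambda> \<Lambda>'"
  obtains B where "finite B" "B \<subseteq> \<Lambda>" "\<Lambda> \<subseteq> span B"
    "\<And>\<phi>. \<phi> \<in> B \<Longrightarrow> \<exists>\<mu>::real. \<mu> *\<^sub>R \<phi> + imul \<phi> \<in> \<Lambda>'"
proof -
  obtain S where S: "linear S" "\<And>y. y \<in> \<Lambda> \<Longrightarrow> S y \<in> \<Lambda>" "\<And>y. y \<in> \<Lambda> \<Longrightarrow> S y + imul y \<in> \<Lambda>'"
    using lagrangian_graph_map[OF L L'] tr unfolding transversal_def by metis
  define E where "E = {v \<in> \<Lambda>. \<exists>\<mu>. S v = \<mu> *\<^sub>R v}"
  have "\<Lambda> \<subseteq> span E"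
    unfolding E_def using L S(2) lagrangian_graph_map_symmetric[OF L L' S(2,3)]
    by (intro self_adjoint_eigenvectors_span[OF S(1)]) (auto simp: lagrangian_subspace_def)
  obtain B where B: "B \<subseteq> E" "independent B" "E \<subseteq> span B"
    by (rule maximal_independent_subset)
  have eigen: "\<exists>\<mu>::real. \<mu> *\<^sub>R \<phi> + imul \<phi> \<in> \<Lambda>'" if \<phi>: "\<phi> \<in> E" for \<phi>
  proof -
    obtain \<mu> where "\<phi> \<in> \<Lambda>" "S \<phi> = \<mu> *\<^sub>R \<phi>"
      using \<phi> unfolding E_def by blast
    then show ?thesis
      using S(3)[of \<phi>] by auto
  qed
  have "\<Lambda> \<subseteq> span B"
    using \<open>\<Lambda> \<subseteq> span E\<close> B(3) by (metis span_mono span_span subset_trans)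
  show ?thesis
  proof (rule that[of B])
    show "finite B"
      using B(2) by (rule finiteI_independent)
    show "B \<subseteq> \<Lambda>"
      using B(1) by (auto simp: E_def)
  qed (use \<open>\<Lambda> \<subseteq> span B\<close> eigen B(1) in auto)
qed

lemma Im_cinner_lagrangian:
  "lagrangian_subspace L \<Longrightarrow> \<phi> \<in> L \<Longrightarrow> v \<in> L \<Longrightarrow> Im (cinner \<phi> v) = 0"
  by (simp add: Im_cinner lagrangian_imul_inner_eq_0)

lemma Im_cis_cinner_lagrangian:
  assumes L': "lagrangian_subspace L'" and "\<mu> *\<^sub>R \<phi> + imul \<phi> \<in> L'" "v \<in> L'"
  shows "Im (cnj (cis (Arg (of_real \<mu> + \<i>))) * cinner \<phi> v) = 0"
proof -
  define c where "c = complex_of_real \<mu> + \<i>"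
  have "cinner (\<mu> *\<^sub>R \<phi> + imul \<phi>) v = cnj c * cinner \<phi> v"
    by (simp add: c_def cinner_add_left cinner_scaleR_left cinner_imul_left algebra_simps)
  then have Im_0: "Im (cnj c * cinner \<phi> v) = 0"
    using Im_cinner_lagrangian[OF assms] by simp
  define Y where "Y = cnj (cis (Arg c)) * cinner \<phi> v"
  have "c = of_real (norm c) * cis (Arg c)"
    using rcis_cmod_Arg[of c] by (simp add: rcis_def)
  then have "cnj c = of_real (norm c) * cnj (cis (Arg c))"
    by (metis complex_cnj_complex_of_real complex_cnj_mult)
  then have "cnj c * cinner \<phi> v = of_real (norm c) * Y"
    unfolding Y_def by (simp only: mult.assoc)
  with Im_0 have "norm c * Im Y = 0"
    by simp
  moreover have "0 < norm c"
    by (simp add: c_def complex_eq_iff)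
  ultimately have "Im Y = 0"
    by simp
  then show ?thesis
    unfolding Y_def c_def .
qed

lemma lagrangian_pair_angle_basis:
  fixes \<Lambda> \<Lambda>' :: "(complex ^ 'n) set"
  assumes L: "lagrangian_subspace \<Lambda>" and L': "lagrangian_subspace \<Lambda>'" and tr: "transversal \<Lambda> \<Lambda>'"
  obtains B \<theta> where "finite B" "B \<subseteq> \<Lambda>" "\<Lambda> \<subseteq> span B" "\<And>\<phi>. \<phi> \<in> B \<Longrightarrow> 0 < \<theta> \<phi> \<and> \<theta> \<phi> < pi"
    "\<And>\<phi> v. \<phi> \<in> B \<Longrightarrow> v \<in> \<Lambda>' \<Longrightarrow> Im (cnj (cis (\<theta> \<phi>)) * cinner \<phi> v) = 0"
proof -
  obtain B where B: "finite B" "B \<subseteq> \<Lambda>" "\<Lambda> \<subseteq> span B"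
    and "\<And>\<phi>. \<phi> \<in> B \<Longrightarrow> \<exists>\<mu>::real. \<mu> *\<^sub>R \<phi> + imul \<phi> \<in> \<Lambda>'"
    using lagrangian_pair_eigenbasis[OF L L' tr] by blast
  then obtain \<mu> where \<mu>: "\<And>\<phi>. \<phi> \<in> B \<Longrightarrow> \<mu> \<phi> *\<^sub>R \<phi> + imul \<phi> \<in> \<Lambda>'"
    by metis
  show ?thesis
  proof (rule that[OF B, of "\<lambda>\<phi>. Arg (of_real (\<mu> \<phi>) + \<i>)"])
    show "0 < Arg (of_real (\<mu> \<phi>) + \<i>) \<and> Arg (of_real (\<mu> \<phi>) + \<i>) < pi" for \<phi>
      using Arg_lt_pi[of "of_real (\<mu> \<phi>) + \<i>"] by simp
    show "Im (cnj (cis (Arg (of_real (\<mu> \<phi>) + \<i>))) * cinner \<phi> v) = 0" if "\<phi> \<in> B" "v \<in> \<Lambda>'" for \<phi> v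
      using Im_cis_cinner_lagrangian[OF L' \<mu>[OF that(1)] that(2)] .
  qed
qed

lemma norm_le_sum_norm_cinner:
  fixes L B :: "(complex ^ 'n) set"
  assumes L: "lagrangian_subspace L" and "finite B" "L \<subseteq> span B"
  shows "\<exists>K>0. \<forall>v. norm v \<le> K * (\<Sum>\<phi>\<in>B. norm (cinner \<phi> v))"
proof -
  have "continuous_on UNIV (\<lambda>v. \<Sum>\<phi>\<in>B. norm (cinner \<phi> v))"
    by (intro continuous_intros)
  moreover have "(\<Sum>\<phi>\<in>B. norm (cinner \<phi> (c *\<^sub>R v))) = \<bar>c\<bar> * (\<Sum>\<phi>\<in>B. norm (cinner \<phi> v))" for c v
    by (simp add: cinner_scaleR_right norm_mult sum_distrib_left)
  moreover have "0 < (\<Sum>\<phi>\<in>B. norm (cinner \<phi> v))" if "v \<noteq> 0" for v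
  proof (rule ccontr)
    assume "\<not> 0 < (\<Sum>\<phi>\<in>B. norm (cinner \<phi> v))"
    then have "(\<Sum>\<phi>\<in>B. norm (cinner \<phi> v)) = 0"
      by (simp add: order.antisym sum_nonneg)
    then have "\<forall>\<phi>\<in>B. cinner \<phi> v = 0"
      using \<open>finite B\<close> by (simp add: sum_nonneg_eq_0_iff)
    moreover have "subspace {\<phi>. cinner \<phi> v = 0}"
      by (auto simp: subspace_def cinner_add_left cinner_scaleR_left)
    ultimately have "cinner \<phi> v = 0" if "\<phi> \<in> L" for \<phi>
      using that \<open>L \<subseteq> span B\<close> span_induct[of \<phi> B "\<lambda>\<phi>. cinner \<phi> v = 0"] by auto
    moreover obtain x y where "x \<in> L" "y \<in> L" "v = x + imul y"
      using lagrangian_decomposition[OF L] by blast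
    ultimately have "x \<bullet> v = 0" "imul y \<bullet> v = 0"
      using Re_cinner[of x v] Im_cinner[of y v] by auto
    then have "v \<bullet> v = 0"
      using \<open>v = x + imul y\<close> by (simp add: inner_add_left)
    with \<open>v \<noteq> 0\<close> show False
      by simp
  qed
  ultimately show ?thesis
    by (rule norm_le_mult_positive_homogeneous)
qed

section \<open>Exponential decay in the strip\<close>

lemma norm_le_sup_norm_on:
  assumes "continuous_on A f" "compact A" "z \<in> A"
  shows "norm (f z) \<le> sup_norm_on f A"
proof -
  have "bdd_above ((\<lambda>z. norm (f z)) ` A)"
    using assms(1,2) by (intro bounded_imp_bdd_above compact_imp_bounded compact_continuous_image
        continuous_on_norm)
  then show ?thesis
    unfolding sup_norm_on_def by (rule cSUP_upper[OF assms(3)])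
qed

lemma cinner_strip_decay:
  fixes f :: "complex \<Rightarrow> complex ^ 'n"
  assumes L: "lagrangian_subspace \<Lambda>" and \<phi>: "\<phi> \<in> \<Lambda>"
    and \<phi>_top: "\<And>v. v \<in> \<Lambda>' \<Longrightarrow> Im (cnj (cis \<theta>) * cinner \<phi> v) = 0"
    and "2 < b - a" and f: "holomorphic_strip a b f"
    and bottom: "\<forall>s\<in>{a..b}. f (Complex s 0) \<in> \<Lambda>" and top: "\<forall>s\<in>{a..b}. f (Complex s 1) \<in> \<Lambda>'"
    and \<delta>: "0 < \<delta>" "\<delta> \<le> \<theta>" "\<delta> \<le> pi - \<theta>"
    and st: "s \<in> {a..b}" "t \<in> {0..1}"
  shows "norm (cinner \<phi> (f (Complex s t))) \<le> 2 * exp pi / (1 - exp (- pi)) *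
      ((\<Sum>i\<in>UNIV. norm (\<phi> $ i)) * sup_norm_on f (rect a (a + 2) 0 1 \<union> rect (b - 2) b 0 1)) *
      exp (- \<delta> * min (s - a) (b - s))"
proof (rule strip_exponential_decay[OF \<open>2 < b - a\<close> _ _ _ _ _ \<delta> st])
  have cont: "continuous_on (rect a b 0 1) f"
    using f by (simp add: holomorphic_strip_def)
  then show "continuous_on (rect a b 0 1) (\<lambda>z. cinner \<phi> (f z))"
    by (intro continuous_intros)
  show "(\<lambda>z. cinner \<phi> (f z)) holomorphic_on open_rect a b 0 1"
    using f unfolding holomorphic_strip_def cinner_def by (intro holomorphic_intros) auto
  show "Im (cinner \<phi> (f (Complex x 0))) = 0" if "x \<in> {a..b}" for x
    using Im_cinner_lagrangian[OF L \<phi>] bottom that by blast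
  show "Im (cnj (cis \<theta>) * cinner \<phi> (f (Complex x 1))) = 0" if "x \<in> {a..b}" for x
    using \<phi>_top top that by blast
  fix z assume z: "z \<in> rect a (a + 2) 0 1 \<union> rect (b - 2) b 0 1"
  have "rect a (a + 2) 0 1 \<union> rect (b - 2) b 0 1 \<subseteq> rect a b 0 1"
    using \<open>2 < b - a\<close> by (auto simp: rect_def)
  then have "norm (f z) \<le> sup_norm_on f (rect a (a + 2) 0 1 \<union> rect (b - 2) b 0 1)"
    using z by (intro norm_le_sup_norm_on continuous_on_subset[OF cont])
      (auto simp: rect_eq_cbox intro: compact_Un)
  then have "(\<Sum>i\<in>UNIV. norm (\<phi> $ i)) * norm (f z) \<le>
      (\<Sum>i\<in>UNIV. norm (\<phi> $ i)) * sup_norm_on f (rect a (a + 2) 0 1 \<union> rect (b - 2) b 0 1)"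
    by (intro mult_left_mono sum_nonneg) auto
  with norm_cinner_le show "norm (cinner \<phi> (f z)) \<le>
      (\<Sum>i\<in>UNIV. norm (\<phi> $ i)) * sup_norm_on f (rect a (a + 2) 0 1 \<union> rect (b - 2) b 0 1)"
    by (rule order_trans)
qed

lemma strip_decay_of_angle_basis:
  fixes f :: "complex \<Rightarrow> complex ^ 'n" and B :: "(complex ^ 'n) set"
  assumes L: "lagrangian_subspace \<Lambda>" and B: "finite B" "B \<subseteq> \<Lambda>"
    and K: "0 \<le> K" "\<And>v. norm v \<le> K * (\<Sum>\<phi>\<in>B. norm (cinner \<phi> v))"
    and top: "\<And>\<phi> v. \<phi> \<in> B \<Longrightarrow> v \<in> \<Lambda>' \<Longrightarrow> Im (cnj (cis (\<theta> \<phi>)) * cinner \<phi> v) = 0"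
    and \<delta>: "0 < \<delta>" "\<And>\<phi>. \<phi> \<in> B \<Longrightarrow> \<delta> \<le> \<theta> \<phi> \<and> \<delta> \<le> pi - \<theta> \<phi>"
    and f: "2 < b - a" "holomorphic_strip a b f"
      "\<forall>s\<in>{a..b}. f (Complex s 0) \<in> \<Lambda>" "\<forall>s\<in>{a..b}. f (Complex s 1) \<in> \<Lambda>'"
    and st: "s \<in> {a..b}" "t \<in> {0..1}"
  shows "norm (f (Complex s t)) \<le> K * (2 * exp pi / (1 - exp (- pi))) * (\<Sum>\<phi>\<in>B. \<Sum>i\<in>UNIV. norm (\<phi> $ i))
    * sup_norm_on f (rect a (a + 2) 0 1 \<union> rect (b - 2) b 0 1) * exp (- \<delta> * min (s - a) (b - s))"
proof -
  define M where "M = sup_norm_on f (rect a (a + 2) 0 1 \<union> rect (b - 2) b 0 1)"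
  define e where "e = exp (- \<delta> * min (s - a) (b - s))"
  have decay: "norm (cinner \<phi> (f (Complex s t))) \<le>
      2 * exp pi / (1 - exp (- pi)) * ((\<Sum>i\<in>UNIV. norm (\<phi> $ i)) * M) * e" if "\<phi> \<in> B" for \<phi>
    unfolding M_def e_def
    by (rule cinner_strip_decay[OF L _ top[OF that] f \<delta>(1) _ _ st]) (use that B(2) \<delta>(2) in auto)
  have "norm (f (Complex s t)) \<le> K * (\<Sum>\<phi>\<in>B. norm (cinner \<phi> (f (Complex s t))))"
    by (rule K(2))
  also have "\<dots> \<le> K * (\<Sum>\<phi>\<in>B. 2 * exp pi / (1 - exp (- pi)) * ((\<Sum>i\<in>UNIV. norm (\<phi> $ i)) * M) * e)"
    using K(1) decay by (intro mult_left_mono sum_mono) auto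
  finally show ?thesis
    by (simp add: M_def e_def sum_distrib_left sum_distrib_right sum_divide_distrib ac_simps)
qed

theorem lemmaA8:
  fixes \<Lambda> \<Lambda>' :: "(complex ^ 'n) set"
  assumes "lagrangian_subspace \<Lambda>" and "lagrangian_subspace \<Lambda>'"
    and "transversal \<Lambda> \<Lambda>'"
  shows "\<exists>C \<delta>::real. \<delta> > 0 \<and>
    (\<forall>a b (f :: complex \<Rightarrow> complex ^ 'n).
       b - a > 2 \<and> holomorphic_strip a b f \<and>
       (\<forall>s\<in>{a..b}. f (Complex s 0) \<in> \<Lambda>) \<and>
       (\<forall>s\<in>{a..b}. f (Complex s 1) \<in> \<Lambda>') \<longrightarrow>
       (\<forall>s\<in>{a..b}. \<forall>t\<in>{0..1}.
          norm (f (Complex s t)) \<le>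
            C * sup_norm_on f (rect a (a + 2) 0 1 \<union> rect (b - 2) b 0 1)
              * exp (- \<delta> * min (s - a) (b - s))))"
proof -
  obtain B \<theta> where B: "finite B" "B \<subseteq> \<Lambda>" "\<Lambda> \<subseteq> span B"
    and \<theta>: "\<And>\<phi>. \<phi> \<in> B \<Longrightarrow> 0 < \<theta> \<phi> \<and> \<theta> \<phi> < pi"
    and top: "\<And>\<phi> v. \<phi> \<in> B \<Longrightarrow> v \<in> \<Lambda>' \<Longrightarrow> Im (cnj (cis (\<theta> \<phi>)) * cinner \<phi> v) = 0"
    using lagrangian_pair_angle_basis[OF assms] by blast
  obtain K where "0 < K" and K: "\<And>v. norm v \<le> K * (\<Sum>\<phi>\<in>B. norm (cinner \<phi> v))"
    using norm_le_sum_norm_cinner[OF assms(1) B(1,3)] by blast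
  \<comment> \<open>The 1 only keeps the minimum well defined should \<open>B\<close> be empty.\<close>
  define \<delta> where "\<delta> = Min (insert 1 ((\<lambda>\<phi>. min (\<theta> \<phi>) (pi - \<theta> \<phi>)) ` B))"
  have "0 < \<delta>"
    using B(1) \<theta> by (auto simp: \<delta>_def)
  have "\<delta> \<le> min (\<theta> \<phi>) (pi - \<theta> \<phi>)" if "\<phi> \<in> B" for \<phi>
    unfolding \<delta>_def using B(1) that by (intro Min_le) auto
  then have \<delta>_le: "\<delta> \<le> \<theta> \<phi> \<and> \<delta> \<le> pi - \<theta> \<phi>" if "\<phi> \<in> B" for \<phi>
    using that by simp
  define C where "C = K * (2 * exp pi / (1 - exp (- pi))) * (\<Sum>\<phi>\<in>B. \<Sum>i\<in>UNIV. norm (\<phi> $ i))"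
  have "norm (f (Complex s t)) \<le> C * sup_norm_on f (rect a (a + 2) 0 1 \<union> rect (b - 2) b 0 1)
      * exp (- \<delta> * min (s - a) (b - s))"
    if "b - a > 2 \<and> holomorphic_strip a b f \<and> (\<forall>s\<in>{a..b}. f (Complex s 0) \<in> \<Lambda>) \<and>
        (\<forall>s\<in>{a..b}. f (Complex s 1) \<in> \<Lambda>')" "s \<in> {a..b}" "t \<in> {0..1}"
    for a b s t :: real and f :: "complex \<Rightarrow> complex ^ 'n"
    unfolding C_def using that \<open>0 < K\<close> \<open>0 < \<delta>\<close> \<delta>_le
    by (intro strip_decay_of_angle_basis[OF assms(1) B(1,2) _ K top]) auto
  with \<open>0 < \<delta>\<close> show ?thesis
    by blast
qed

end
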